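(* Fix a constant $\Delta$. There is no LCL problem on trees of maximum degree at most $\Delta$ with mending radius between $\omega(1)$ and $o(\log n)$: if such an LCL problem $\Pi$ is $T$-mendable for some function $T$ with $T(n)=o(\log n)$, then $\Pi$ is $T'$-mendable for some constant function $T'$.
   Context: A locally verifiable problem $\Pi$ on a graph family $\mathcal{G}$ is given by a set $\Sigma$ of input labels, a set $\Gamma$ of output labels and a verifier $\psi$ with verification radius $r$: $\psi(G,\lambda,v)\in\{\text{happy},\text{unhappy}\}$ depends only on the radius-$r$ neighborhood of $v$ (structure, inputs and outputs, up to isomorphism); $\lambda:V\to\Gamma$ is a solution if $\psi$ is happy everywhere. $\Pi$ is an LCL problem if $\Sigma,\Gamma$ are finite and all graphs in $\mathcal{G}$ have maximum degree bounded by a constant. Partial labelings are maps $\lambda:V\to\Gamma\cup\{\bot\}$; the relaxed verifier $\psi^*$ is happy at $v$ if some node within distance $r$ of $v$ has label $\bot$, and otherwise $\psi^*(G,\lambda,v)=\psi(G,\lambda',v)$ for any $\lambda':V\to\Gamma$ agreeing with $\lambda$ on the radius-$r$ neighborhood of $v$; $\psi^*$ accepts $\lambda$ if happy everywhere. Given $\lambda$ accepted by $\psi^*$ and node $v$, a $t$-mend of $\lambda$ at $v$ is a partial labeling $\mu$ accepted by $\psi^*$ with $\mu(v)\neq\bot$, $\mu(u)=\bot\Rightarrow\lambda(u)=\bot$, and $\mu(u)\neq\lambda(u)\Rightarrow\mathrm{dist}(u,v)\le t$. A verifier is $T$-mendable if for every $G\in\mathcal{G}$ with $n$ nodes, every $\lambda$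 accepted by $\psi^*$ and every node $v$, a $T(n)$-mend at $v$ exists; $\Pi$ is $T$-mendable if some radius-$r$ verifier for $\Pi$ (accepting exactly the solutions of $\Pi$) is $T$-mendable. *)

theory Defs
  imports Main "HOL-Library.Landau_Symbols"
begin

definition walk_len :: "(nat \<Rightarrow> nat \<Rightarrow> bool) \<Rightarrow> nat \<Rightarrow> nat \<Rightarrow> nat \<Rightarrow> bool" where
  "walk_len E u v k \<longleftrightarrow> (\<exists>ps. length ps = Suc k \<and> hd ps = u \<and> last ps = v \<and>
      (\<forall>i<k. E (ps ! i) (ps ! Suc i)))"

definition dist_le :: "(nat \<Rightarrow> nat \<Rightarrow> bool) \<Rightarrow> nat \<Rightarrow> nat \<Rightarrow> nat \<Rightarrow> bool" where
  "dist_le E u v t \<longleftrightarrow> (\<exists>k\<le>t. walk_len E u v k)"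

definition ball :: "nat set \<Rightarrow> (nat \<Rightarrow> nat \<Rightarrow> bool) \<Rightarrow> nat \<Rightarrow> nat \<Rightarrow> nat set" where
  "ball V E v r = {u \<in> V. dist_le E v u r}"

definition is_graph :: "nat set \<Rightarrow> (nat \<Rightarrow> nat \<Rightarrow> bool) \<Rightarrow> bool" where
  "is_graph V E \<longleftrightarrow> finite V \<and> (\<forall>u v. E u v \<longrightarrow> u \<in> V \<and> v \<in> V \<and> E v u \<and> u \<noteq> v)"

definition connected_graph :: "nat set \<Rightarrow> (nat \<Rightarrow> nat \<Rightarrow> bool) \<Rightarrow> bool" where
  "connected_graph V E \<longleftrightarrow> (\<forall>u\<in>V. \<forall>v\<in>V. \<exists>k. walk_len E u v k)"

definition has_cycle :: "(nat \<Rightarrow> nat \<Rightarrow> bool) \<Rightarrow> bool" where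
  "has_cycle E \<longleftrightarrow> (\<exists>cs. length cs \<ge> 3 \<and> distinct cs \<and>
      (\<forall>i<length cs. E (cs ! i) (cs ! ((i + 1) mod length cs))))"

definition is_tree :: "nat set \<Rightarrow> (nat \<Rightarrow> nat \<Rightarrow> bool) \<Rightarrow> bool" where
  "is_tree V E \<longleftrightarrow> is_graph V E \<and> V \<noteq> {} \<and> connected_graph V E \<and> \<not> has_cycle E"

definition max_deg_le :: "nat set \<Rightarrow> (nat \<Rightarrow> nat \<Rightarrow> bool) \<Rightarrow> nat \<Rightarrow> bool" where
  "max_deg_le V E \<Delta> \<longleftrightarrow> (\<forall>v\<in>V. card {u. E v u} \<le> \<Delta>)"

definition tree_family :: "nat \<Rightarrow> nat set \<Rightarrow> (nat \<Rightarrow> nat \<Rightarrow> bool) \<Rightarrow> bool" where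
  "tree_family \<Delta> V E \<longleftrightarrow> is_tree V E \<and> max_deg_le V E \<Delta>"

type_synonym ('i,'o) verifier =
  "nat set \<Rightarrow> (nat \<Rightarrow> nat \<Rightarrow> bool) \<Rightarrow> (nat \<Rightarrow> 'i) \<Rightarrow> (nat \<Rightarrow> 'o) \<Rightarrow> nat \<Rightarrow> bool"
  (* True = happy *)

definition local_verifier :: "nat \<Rightarrow> nat \<Rightarrow> ('i,'o) verifier \<Rightarrow> bool" where
  "local_verifier \<Delta> r \<psi> \<longleftrightarrow>
    (\<forall>V1 E1 in1 out1 v1 V2 E2 in2 out2 v2 f.
       tree_family \<Delta> V1 E1 \<and> tree_family \<Delta> V2 E2 \<and> v1 \<in> V1 \<and> v2 \<in> V2 \<and>
       bij_betw f (ball V1 E1 v1 r) (ball V2 E2 v2 r) \<and> f v1 = v2 \<and>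
       (\<forall>x\<in>ball V1 E1 v1 r. \<forall>y\<in>ball V1 E1 v1 r. E1 x y \<longleftrightarrow> E2 (f x) (f y)) \<and>
       (\<forall>x\<in>ball V1 E1 v1 r. in1 x = in2 (f x) \<and> out1 x = out2 (f x))
     \<longrightarrow> \<psi> V1 E1 in1 out1 v1 = \<psi> V2 E2 in2 out2 v2)"

definition accepts :: "('i,'o) verifier \<Rightarrow> nat set \<Rightarrow> (nat \<Rightarrow> nat \<Rightarrow> bool) \<Rightarrow> (nat \<Rightarrow> 'i)
    \<Rightarrow> (nat \<Rightarrow> 'o) \<Rightarrow> bool" where
  "accepts \<psi> V E inp lab \<longleftrightarrow> (\<forall>v\<in>V. \<psi> V E inp lab v)"

text \<open>Partial labelings: None plays the role of \<bottom>. Relaxed verifier \<psi>*.\<close>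
definition relaxed :: "nat \<Rightarrow> ('i,'o) verifier \<Rightarrow> nat set \<Rightarrow> (nat \<Rightarrow> nat \<Rightarrow> bool) \<Rightarrow> (nat \<Rightarrow> 'i)
    \<Rightarrow> (nat \<Rightarrow> 'o option) \<Rightarrow> nat \<Rightarrow> bool" where
  "relaxed r \<psi> V E inp \<mu> v \<longleftrightarrow>
     (\<exists>u\<in>ball V E v r. \<mu> u = None) \<or>
     (\<forall>lab'. (\<forall>u\<in>ball V E v r. \<mu> u = Some (lab' u)) \<longrightarrow> \<psi> V E inp lab' v)"

definition accepts_relaxed :: "nat \<Rightarrow> ('i,'o) verifier \<Rightarrow> nat set \<Rightarrow> (nat \<Rightarrow> nat \<Rightarrow> bool)
    \<Rightarrow> (nat \<Rightarrow> 'i) \<Rightarrow> (nat \<Rightarrow> 'o option) \<Rightarrow> bool" where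
  "accepts_relaxed r \<psi> V E inp \<mu> \<longleftrightarrow> (\<forall>v\<in>V. relaxed r \<psi> V E inp \<mu> v)"

definition is_mend :: "nat \<Rightarrow> ('i,'o) verifier \<Rightarrow> nat set \<Rightarrow> (nat \<Rightarrow> nat \<Rightarrow> bool) \<Rightarrow> (nat \<Rightarrow> 'i)
    \<Rightarrow> (nat \<Rightarrow> 'o option) \<Rightarrow> nat \<Rightarrow> nat \<Rightarrow> (nat \<Rightarrow> 'o option) \<Rightarrow> bool" where
  "is_mend r \<psi> V E inp lab v t \<mu> \<longleftrightarrow>
     accepts_relaxed r \<psi> V E inp \<mu> \<and> \<mu> v \<noteq> None \<and>
     (\<forall>u\<in>V. \<mu> u = None \<longrightarrow> lab u = None) \<and>
     (\<forall>u\<in>V. \<mu> u \<noteq> lab u \<longrightarrow> dist_le E u v t)"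

definition mendable_verifier :: "nat \<Rightarrow> nat \<Rightarrow> ('i,'o) verifier \<Rightarrow> (nat \<Rightarrow> nat) \<Rightarrow> bool" where
  "mendable_verifier \<Delta> r \<psi> T \<longleftrightarrow>
     (\<forall>V E inp lab v. tree_family \<Delta> V E \<and> accepts_relaxed r \<psi> V E inp lab \<and> v \<in> V
        \<longrightarrow> (\<exists>\<mu>. is_mend r \<psi> V E inp lab v (T (card V)) \<mu>))"

text \<open>The LCL problem \<Pi> on the family is given by a radius-r local verifier \<psi>
  (finite label sets are the finite types 'i, 'o; bounded degree by \<Delta>).
  \<Pi> is T-mendable iff some local verifier accepting exactly the solutions of \<Pi>
  is T-mendable.\<close>
definition problem_mendable :: "nat \<Rightarrow> nat \<Rightarrow> ('i,'o) verifier \<Rightarrow> (nat \<Rightarrow> nat) \<Rightarrow> bool" where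
  "problem_mendable \<Delta> r \<psi> T \<longleftrightarrow>
     (\<exists>r' \<psi>'. local_verifier \<Delta> r' \<psi>' \<and>
        (\<forall>V E inp lab. tree_family \<Delta> V E \<longrightarrow> (accepts \<psi>' V E inp lab \<longleftrightarrow> accepts \<psi> V E inp lab)) \<and>
        mendable_verifier \<Delta> r' \<psi>' T)"

end

theory Submission
  imports Defs
begin

text \<open>Mending is local. Let r be the radius of a T-mendable verifier. To mend a partial
  labelling of a tree at v within radius c, cut out the ball B of radius c + 3r around v,
  erase the labels at distance more than c + 2r from v, and mend this partial labelling of
  the tree B instead; the erased zone keeps the relaxed verifier happy near the boundary of B,
  where B looks different from the whole tree. The mend found in B has radius T(|B|), and it
  glues back into the whole tree. Since |B| \<le> (\<Delta>+1)^(c+3r), this is a c-mend as soon as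
  T(n) \<le> c for all n \<le> (\<Delta>+1)^(c+3r). If T(n) = o(log n), such a c exists: take c \<ge> 3r and at
  least all values of T below the point from which 2 T(n) log(\<Delta>+2) \<le> log n.\<close>

lemma walk_len_0_iff: "walk_len E u v 0 \<longleftrightarrow> u = v"
  unfolding walk_len_def by (auto simp: length_Suc_conv intro!: exI[of _ "[v]"])

lemma walk_len_Suc_iff: "walk_len E u w (Suc k) \<longleftrightarrow> (\<exists>x. walk_len E u x k \<and> E x w)"
proof
  assume "walk_len E u w (Suc k)"
  then obtain ps where ps: "length ps = Suc (Suc k)" "hd ps = u" "last ps = w"
    "\<forall>i<Suc k. E (ps ! i) (ps ! Suc i)" unfolding walk_len_def by blast
  define qs where "qs = butlast ps"
  have qs: "length qs = Suc k" "\<And>i. i < Suc k \<Longrightarrow> qs ! i = ps ! i"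
    using ps(1) by (simp_all add: qs_def nth_butlast)
  have "hd qs = u"
    using qs(1) qs(2)[of 0] ps(1,2) by (metis Zero_not_Suc hd_conv_nth list.size(3) zero_less_Suc)
  moreover have "last qs = ps ! k"
    using qs(1) qs(2)[of k] by (metis Zero_not_Suc diff_Suc_1 last_conv_nth lessI list.size(3))
  ultimately have "walk_len E u (ps ! k) k"
    unfolding walk_len_def using qs ps(4) by (intro exI[of _ qs]) auto
  moreover have "E (ps ! k) w"
    using ps by (metis Zero_not_Suc diff_Suc_1 last_conv_nth lessI list.size(3))
  ultimately show "\<exists>x. walk_len E u x k \<and> E x w" by blast
next
  assume "\<exists>x. walk_len E u x k \<and> E x w"
  then obtain x ps where ps: "length ps = Suc k" "hd ps = u" "last ps = x"
    "\<forall>i<k. E (ps ! i) (ps ! Suc i)" and "E x w" unfolding walk_len_def by blast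
  then have "ps ! k = x" by (metis Zero_not_Suc diff_Suc_1 last_conv_nth list.size(3))
  then have "\<forall>i<Suc k. E ((ps @ [w]) ! i) ((ps @ [w]) ! Suc i)"
    using ps \<open>E x w\<close> by (auto simp: nth_append less_Suc_eq)
  then show "walk_len E u w (Suc k)"
    unfolding walk_len_def using ps by (intro exI[of _ "ps @ [w]"]) (auto simp: hd_append)
qed

lemma walk_len_trans: "walk_len E a b k \<Longrightarrow> walk_len E b c m \<Longrightarrow> walk_len E a c (k + m)"
  by (induction m arbitrary: c) (auto simp: walk_len_0_iff walk_len_Suc_iff)

lemma walk_len_sym:
  assumes "\<And>x y. E x y \<Longrightarrow> E y x"
  shows "walk_len E u w k \<Longrightarrow> walk_len E w u k"
proof (induction k arbitrary: w)
  case 0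
  then show ?case by (simp add: walk_len_0_iff)
next
  case (Suc k)
  then obtain x where "walk_len E u x k" "E x w" by (auto simp: walk_len_Suc_iff)
  then have "walk_len E x u k" "E w x" using Suc.IH assms by auto
  moreover have "walk_len E w x 1" using \<open>E w x\<close> by (simp add: walk_len_Suc_iff walk_len_0_iff)
  ultimately show ?case using walk_len_trans[of E w x 1 u k] by simp
qed

lemma walk_len_mono:
  assumes "\<And>x y. E x y \<Longrightarrow> E' x y"
  shows "walk_len E u w k \<Longrightarrow> walk_len E' u w k"
  by (induction k arbitrary: w) (auto simp: walk_len_0_iff walk_len_Suc_iff intro: assms)

lemma dist_le_refl: "dist_le E u u k"
  unfolding dist_le_def using walk_len_0_iff by blast

lemma dist_le_mono: "dist_le E u w k \<Longrightarrow> k \<le> m \<Longrightarrow> dist_le E u w m"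
  unfolding dist_le_def by (meson order_trans)

lemma dist_le_trans: "dist_le E a b k \<Longrightarrow> dist_le E b c m \<Longrightarrow> dist_le E a c (k + m)"
  unfolding dist_le_def by (meson add_le_mono walk_len_trans)

lemma dist_le_sym: "(\<And>x y. E x y \<Longrightarrow> E y x) \<Longrightarrow> dist_le E u w k \<Longrightarrow> dist_le E w u k"
  unfolding dist_le_def using walk_len_sym by metis

lemma tree_family_is_graph: "tree_family D V E \<Longrightarrow> is_graph V E"
  unfolding tree_family_def is_tree_def by auto

lemma ball_subset: "ball V E v R \<subseteq> V"
  unfolding ball_def by auto

definition induced :: "(nat \<Rightarrow> nat \<Rightarrow> bool) \<Rightarrow> nat set \<Rightarrow> nat \<Rightarrow> nat \<Rightarrow> bool" where
  "induced E B x y \<longleftrightarrow> E x y \<and> x \<in> B \<and> y \<in> B"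

lemma walk_len_induced:
  assumes "walk_len (induced E B) u w k"
  shows "walk_len E u w k"
  by (rule walk_len_mono[OF _ assms]) (simp add: induced_def)

lemma walk_len_induced_ball:
  assumes g: "is_graph V E" and d: "dist_le E v w a"
  shows "walk_len E w u k \<Longrightarrow> a + k \<le> R \<Longrightarrow> walk_len (induced E (ball V E v R)) w u k"
proof (induction k arbitrary: u)
  case 0
  then show ?case by (simp add: walk_len_0_iff)
next
  case (Suc k)
  then obtain x where x: "walk_len E w x k" "E x u" by (auto simp: walk_len_Suc_iff)
  have "dist_le E w x k" "dist_le E w u (Suc k)"
    using x Suc.prems(1) unfolding dist_le_def by auto
  then have "dist_le E v x (a + k)" "dist_le E v u (a + Suc k)"
    using d dist_le_trans by blast+
  moreover have "x \<in> V" "u \<in> V" using g x(2) unfolding is_graph_def by auto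
  ultimately have "x \<in> ball V E v R" "u \<in> ball V E v R"
    using Suc.prems(2) unfolding ball_def by (auto intro: dist_le_mono)
  then show ?case using Suc x by (auto simp: walk_len_Suc_iff induced_def)
qed

lemma ball_induced_ball:
  assumes g: "is_graph V E" and d: "dist_le E v w a" and "a + s \<le> R"
  shows "ball (ball V E v R) (induced E (ball V E v R)) w s = ball V E w s"
proof
  show "ball (ball V E v R) (induced E (ball V E v R)) w s \<subseteq> ball V E w s"
    unfolding ball_def dist_le_def using walk_len_induced by blast
next
  show "ball V E w s \<subseteq> ball (ball V E v R) (induced E (ball V E v R)) w s"
  proof
    fix u assume u: "u \<in> ball V E w s"
    then obtain k where k: "k \<le> s" "walk_len E w u k" unfolding ball_def dist_le_def by auto
    have "walk_len (induced E (ball V E v R)) w u k"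
      using walk_len_induced_ball[OF g d k(2)] k(1) assms(3) by simp
    moreover have "dist_le E v u (a + s)" using d u dist_le_trans unfolding ball_def by blast
    ultimately show "u \<in> ball (ball V E v R) (induced E (ball V E v R)) w s"
      using u k assms(3) unfolding ball_def dist_le_def by (auto intro: order_trans)
  qed
qed

lemma finite_neighbours: "is_graph V E \<Longrightarrow> finite {u. E x u}"
  unfolding is_graph_def by (metis (no_types, lifting) finite_subset mem_Collect_eq subsetI)

lemma ball_Suc_subset:
  assumes "is_graph V E"
  shows "ball V E v (Suc R) \<subseteq> ball V E v R \<union> (\<Union>x\<in>ball V E v R. {u. E x u})"
proof
  fix u assume "u \<in> ball V E v (Suc R)"
  then obtain k where k: "k \<le> Suc R" "walk_len E v u k" "u \<in> V"
    unfolding ball_def dist_le_def by auto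
  show "u \<in> ball V E v R \<union> (\<Union>x\<in>ball V E v R. {u. E x u})"
  proof (cases k)
    case 0
    then show ?thesis using k unfolding ball_def dist_le_def by auto
  next
    case (Suc j)
    then obtain x where "walk_len E v x j" "E x u" using k by (auto simp: walk_len_Suc_iff)
    moreover have "x \<in> V" using assms \<open>E x u\<close> unfolding is_graph_def by auto
    ultimately show ?thesis using k Suc unfolding ball_def dist_le_def by auto
  qed
qed

lemma card_ball_le:
  assumes g: "is_graph V E" and deg: "max_deg_le V E D"
  shows "card (ball V E v R) \<le> (D + 1) ^ R"
proof (induction R)
  case 0
  have "ball V E v 0 \<subseteq> {v}" unfolding ball_def dist_le_def by (auto simp: walk_len_0_iff)
  from card_mono[OF _ this] show ?case by simp
next
  case (Suc R)
  let ?B = "ball V E v R" and ?N = "\<Union>x\<in>ball V E v R. {u. E x u}"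
  have fin: "finite ?B" using g ball_subset finite_subset unfolding is_graph_def by metis
  have "card ?N \<le> (\<Sum>x\<in>?B. card {u. E x u})" by (rule card_UN_le[OF fin])
  also have "\<dots> \<le> (\<Sum>x\<in>?B. D)"
    using deg ball_subset unfolding max_deg_le_def by (intro sum_mono) blast
  finally have "card ?N \<le> card ?B * D" by simp
  have "card (ball V E v (Suc R)) \<le> card (?B \<union> ?N)"
    using ball_Suc_subset[OF g] fin finite_neighbours[OF g] by (intro card_mono) auto
  also have "\<dots> \<le> card ?B * (D + 1)"
    using card_Un_le[of ?B ?N] \<open>card ?N \<le> card ?B * D\<close> by simp
  also have "\<dots> \<le> (D + 1) ^ Suc R" using Suc.IH by (simp only: power_Suc mult.commute mult_le_mono2)
  finally show ?case .
qed

lemma tree_family_induced_ball: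
  assumes t: "tree_family D V E" and v: "v \<in> V"
  shows "tree_family D (ball V E v R) (induced E (ball V E v R))"
proof -
  let ?B = "ball V E v R" and ?E = "induced E (ball V E v R)"
  have g: "is_graph V E" using t by (rule tree_family_is_graph)
  have g': "is_graph ?B ?E"
    using g ball_subset finite_subset unfolding is_graph_def induced_def by metis
  have "v \<in> ?B" using v dist_le_refl unfolding ball_def by blast
  have reach: "walk_len ?E v u k" if "k \<le> R" "walk_len E v u k" for u k
    using walk_len_induced_ball[OF g dist_le_refl[of E v 0]] that by simp
  have "connected_graph ?B ?E" unfolding connected_graph_def
  proof (intro ballI)
    fix x y assume "x \<in> ?B" "y \<in> ?B"
    then obtain k m where "walk_len ?E v x k" "walk_len ?E v y m"
      using reach unfolding ball_def dist_le_def by blast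
    moreover have "walk_len ?E x v k"
      using walk_len_sym g' \<open>walk_len ?E v x k\<close> unfolding is_graph_def by blast
    ultimately show "\<exists>k. walk_len ?E x y k" using walk_len_trans by blast
  qed
  moreover have "\<not> has_cycle ?E"
    using t unfolding tree_family_def is_tree_def has_cycle_def induced_def by blast
  moreover have "max_deg_le ?B ?E D"
    unfolding max_deg_le_def
  proof
    fix x assume "x \<in> ?B"
    have "card {u. ?E x u} \<le> card {u. E x u}"
      using finite_neighbours[OF g] by (intro card_mono) (auto simp: induced_def)
    also have "\<dots> \<le> D"
      using t \<open>x \<in> ?B\<close> ball_subset unfolding tree_family_def max_deg_le_def by blast
    finally show "card {u. ?E x u} \<le> D" .
  qed
  ultimately show ?thesis
    using g' \<open>v \<in> ?B\<close> unfolding tree_family_def is_tree_def by blast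
qed

lemma relaxed_cong:
  assumes "ball V E w s = ball V' E' w s" and "\<forall>u\<in>ball V E w s. \<mu> u = \<mu>' u"
    and "\<And>lab. \<psi> V E inp lab w = \<psi> V' E' inp lab w"
  shows "relaxed s \<psi> V E inp \<mu> w = relaxed s \<psi> V' E' inp \<mu>' w"
  using assms unfolding relaxed_def by auto

lemma local_verifier_induced_ball:
  assumes loc: "local_verifier D s \<psi>" and t: "tree_family D V E" and v: "v \<in> V"
    and w: "w \<in> V" "dist_le E v w a" and "a + s \<le> R"
  shows "\<psi> (ball V E v R) (induced E (ball V E v R)) inp lab w = \<psi> V E inp lab w"
proof -
  let ?B = "ball V E v R" and ?E = "induced E (ball V E v R)"
  have g: "is_graph V E" using t by (rule tree_family_is_graph)
  have same_ball: "ball ?B ?E w s = ball V E w s"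
    using ball_induced_ball[OF g w(2) \<open>a + s \<le> R\<close>] .
  have "w \<in> ?B" using w \<open>a + s \<le> R\<close> unfolding ball_def by (auto intro: dist_le_mono)
  moreover have "\<forall>x\<in>ball ?B ?E w s. \<forall>y\<in>ball ?B ?E w s. ?E x y \<longleftrightarrow> E x y"
    unfolding induced_def ball_def by auto
  ultimately show ?thesis
    using t tree_family_induced_ball[OF t v] w same_ball
    by (intro loc[unfolded local_verifier_def, rule_format, where f = id]) auto
qed

lemma relaxed_induced_ball_iff:
  assumes loc: "local_verifier D s \<psi>" and t: "tree_family D V E" and v: "v \<in> V"
    and w: "w \<in> V" "dist_le E v w a" and "a + s \<le> R"
    and agree: "\<forall>u\<in>ball V E w s. \<mu>' u = \<mu> u"
  shows "relaxed s \<psi> (ball V E v R) (induced E (ball V E v R)) inp \<mu>' w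
    \<longleftrightarrow> relaxed s \<psi> V E inp \<mu> w"
proof (rule relaxed_cong)
  have "is_graph V E" using t by (rule tree_family_is_graph)
  then show "ball (ball V E v R) (induced E (ball V E v R)) w s = ball V E w s"
    using ball_induced_ball w(2) \<open>a + s \<le> R\<close> by blast
  then show "\<forall>u\<in>ball (ball V E v R) (induced E (ball V E v R)) w s. \<mu>' u = \<mu> u"
    using agree by simp
  show "\<And>lab. \<psi> (ball V E v R) (induced E (ball V E v R)) inp lab w = \<psi> V E inp lab w"
    using local_verifier_induced_ball[OF loc t v w \<open>a + s \<le> R\<close>] .
qed

definition truncate_labeling ::
    "(nat \<Rightarrow> nat \<Rightarrow> bool) \<Rightarrow> nat \<Rightarrow> nat \<Rightarrow> (nat \<Rightarrow> 'o option) \<Rightarrow> nat \<Rightarrow> 'o option" where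
  "truncate_labeling E v \<rho> lab u = (if dist_le E v u \<rho> then lab u else None)"

lemma accepts_relaxed_truncate_labeling:
  assumes loc: "local_verifier D s \<psi>" and t: "tree_family D V E" and v: "v \<in> V"
    and acc: "accepts_relaxed s \<psi> V E inp lab" and "s \<le> R"
  shows "accepts_relaxed s \<psi> (ball V E v R) (induced E (ball V E v R)) inp
    (truncate_labeling E v (R - s) lab)"
  unfolding accepts_relaxed_def
proof
  let ?B = "ball V E v R" and ?E = "induced E (ball V E v R)"
    and ?lab = "truncate_labeling E v (R - s) lab"
  fix w assume "w \<in> ?B"
  show "relaxed s \<psi> ?B ?E inp ?lab w"
  proof (cases "\<exists>u\<in>ball ?B ?E w s. ?lab u = None")
    case True
    then show ?thesis unfolding relaxed_def by blast
  next
    case False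
    have g: "is_graph V E" using t by (rule tree_family_is_graph)
    have "w \<in> ball ?B ?E w s" using \<open>w \<in> ?B\<close> dist_le_refl unfolding ball_def by blast
    then have "?lab w \<noteq> None" using False by metis
    then have w: "dist_le E v w (R - s)" unfolding truncate_labeling_def by (auto split: if_splits)
    then have "ball ?B ?E w s = ball V E w s"
      using ball_induced_ball[OF g] \<open>s \<le> R\<close> by simp
    then have agree: "\<forall>u\<in>ball V E w s. ?lab u = lab u"
      using False unfolding truncate_labeling_def by (metis (full_types))
    have "w \<in> V" using \<open>w \<in> ?B\<close> ball_subset by blast
    then have "relaxed s \<psi> V E inp lab w"
      using acc unfolding accepts_relaxed_def by blast
    then show ?thesis
      using relaxed_induced_ball_iff[OF loc t v \<open>w \<in> V\<close> w _ agree] \<open>s \<le> R\<close> by simp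
  qed
qed

lemma is_mend_induced_ball_changed_near:
  assumes g: "is_graph V E"
    and mend: "is_mend s \<psi> (ball V E v R) (induced E (ball V E v R)) inp lab' v k \<mu>'"
    and "u \<in> ball V E v R" "\<mu>' u \<noteq> lab' u"
  shows "dist_le E v u k"
proof -
  have "dist_le (induced E (ball V E v R)) u v k"
    using mend assms(3,4) unfolding is_mend_def by blast
  then have "dist_le E u v k" unfolding dist_le_def using walk_len_induced by blast
  then show ?thesis using dist_le_sym[of E] g unfolding is_graph_def by blast
qed

lemma accepts_relaxed_glue_induced_ball:
  assumes loc: "local_verifier D s \<psi>" and t: "tree_family D V E" and v: "v \<in> V"
    and acc: "accepts_relaxed s \<psi> V E inp lab"
    and mend: "is_mend s \<psi> (ball V E v R) (induced E (ball V E v R)) inp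
      (truncate_labeling E v (R - s) lab) v k \<mu>'"
    and "k + 3 * s \<le> R"
  shows "accepts_relaxed s \<psi> V E inp (\<lambda>u. if dist_le E v u k then \<mu>' u else lab u)"
  unfolding accepts_relaxed_def
proof
  let ?B = "ball V E v R" and ?E = "induced E (ball V E v R)"
    and ?\<mu> = "\<lambda>u. if dist_le E v u k then \<mu>' u else lab u"
  have g: "is_graph V E" using t by (rule tree_family_is_graph)
  then have dist_sym: "dist_le E y x m" if "dist_le E x y m" for x y m
    using that dist_le_sym[of E] unfolding is_graph_def by blast
  have in_B: "u \<in> ?B" if "u \<in> V" "dist_le E v u m" "m \<le> R" for u m
    using that unfolding ball_def by (auto intro: dist_le_mono)
  have lab_near: "truncate_labeling E v (R - s) lab u = lab u" if "dist_le E v u m" "m \<le> R - s"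
    for u m
    using that unfolding truncate_labeling_def by (auto intro: dist_le_mono)
  note changed_near = is_mend_induced_ball_changed_near[OF g mend]
  fix w assume "w \<in> V"
  show "relaxed s \<psi> V E inp ?\<mu> w"
  proof (cases "\<exists>u\<in>ball V E w s. dist_le E v u k")
    case True
    then obtain u where "dist_le E v u k" "dist_le E u w s"
      using dist_sym unfolding ball_def by blast
    then have "dist_le E v w (k + s)" using dist_le_trans by blast
    moreover have "\<forall>x\<in>ball V E w s. \<mu>' x = ?\<mu> x"
    proof
      fix x assume "x \<in> ball V E w s"
      then have "x \<in> V" "dist_le E v x (k + s + s)"
        using \<open>dist_le E v w (k + s)\<close> dist_le_trans unfolding ball_def by blast+
      then show "\<mu>' x = ?\<mu> x"
        using in_B changed_near lab_near \<open>k + 3 * s \<le> R\<close> by fastforce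
    qed
    moreover have "relaxed s \<psi> ?B ?E inp \<mu>' w"
      using mend in_B[OF \<open>w \<in> V\<close> \<open>dist_le E v w (k + s)\<close>] \<open>k + 3 * s \<le> R\<close>
      unfolding is_mend_def accepts_relaxed_def by simp
    ultimately show ?thesis
      using relaxed_induced_ball_iff[OF loc t v \<open>w \<in> V\<close>] \<open>k + 3 * s \<le> R\<close> by simp
  next
    case False
    then have "relaxed s \<psi> V E inp ?\<mu> w = relaxed s \<psi> V E inp lab w"
      by (intro relaxed_cong) auto
    then show ?thesis using acc \<open>w \<in> V\<close> unfolding accepts_relaxed_def by blast
  qed
qed

lemma is_mend_glue_induced_ball:
  assumes loc: "local_verifier D s \<psi>" and t: "tree_family D V E" and v: "v \<in> V"
    and acc: "accepts_relaxed s \<psi> V E inp lab"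
    and mend: "is_mend s \<psi> (ball V E v R) (induced E (ball V E v R)) inp
      (truncate_labeling E v (R - s) lab) v k \<mu>'"
    and "k + 3 * s \<le> R"
  shows "is_mend s \<psi> V E inp lab v k (\<lambda>u. if dist_le E v u k then \<mu>' u else lab u)"
proof -
  let ?\<mu> = "\<lambda>u. if dist_le E v u k then \<mu>' u else lab u"
  have g: "is_graph V E" using t by (rule tree_family_is_graph)
  then have dist_sym: "dist_le E y x m" if "dist_le E x y m" for x y m
    using that dist_le_sym[of E] unfolding is_graph_def by blast
  have "?\<mu> v \<noteq> None" using mend dist_le_refl unfolding is_mend_def by simp
  moreover have "lab u = None" if "u \<in> V" "?\<mu> u = None" for u
  proof (cases "dist_le E v u k")
    case True
    then have "u \<in> ball V E v R" using that \<open>k + 3 * s \<le> R\<close> unfolding ball_def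
      by (auto intro: dist_le_mono)
    then have "truncate_labeling E v (R - s) lab u = None"
      using mend that True unfolding is_mend_def by auto
    then show ?thesis using True \<open>k + 3 * s \<le> R\<close>
      unfolding truncate_labeling_def by (auto intro: dist_le_mono split: if_splits)
  qed (use that in simp)
  moreover have "dist_le E u v k" if "?\<mu> u \<noteq> lab u" for u
    using that dist_sym by (auto split: if_splits)
  ultimately show ?thesis
    using accepts_relaxed_glue_induced_ball[OF assms] unfolding is_mend_def by blast
qed

lemma is_mend_mono: "is_mend r \<psi> V E inp lab v k \<mu> \<Longrightarrow> k \<le> m \<Longrightarrow> is_mend r \<psi> V E inp lab v m \<mu>"
  unfolding is_mend_def using dist_le_mono by blast

lemma mendable_verifier_const_from_ball_sizes:
  assumes loc: "local_verifier D s \<psi>" and mv: "mendable_verifier D s \<psi> T"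
    and small: "\<And>n. n \<le> (D + 1) ^ (c + 3 * s) \<Longrightarrow> T n \<le> c"
  shows "mendable_verifier D s \<psi> (\<lambda>_. c)"
  unfolding mendable_verifier_def
proof (intro allI impI, elim conjE)
  fix V E inp lab v
  assume t: "tree_family D V E" and acc: "accepts_relaxed s \<psi> V E inp lab" and v: "v \<in> V"
  define R where "R = c + 3 * s"
  let ?B = "ball V E v R" and ?E = "induced E (ball V E v R)"
  have "card ?B \<le> (D + 1) ^ R"
    using card_ball_le tree_family_is_graph[OF t] t unfolding tree_family_def by blast
  then have "T (card ?B) \<le> c" using small unfolding R_def by blast
  have "v \<in> ?B" using v dist_le_refl unfolding ball_def by blast
  moreover have "s \<le> R" unfolding R_def by simp
  then have "accepts_relaxed s \<psi> ?B ?E inp (truncate_labeling E v (R - s) lab)"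
    by (rule accepts_relaxed_truncate_labeling[OF loc t v acc])
  ultimately obtain \<mu>' where
    "is_mend s \<psi> ?B ?E inp (truncate_labeling E v (R - s) lab) v (T (card ?B)) \<mu>'"
    using mv tree_family_induced_ball[OF t v] unfolding mendable_verifier_def by blast
  then have "is_mend s \<psi> ?B ?E inp (truncate_labeling E v (R - s) lab) v c \<mu>'"
    using is_mend_mono \<open>T (card ?B) \<le> c\<close> by blast
  then show "\<exists>\<mu>. is_mend s \<psi> V E inp lab v c \<mu>"
    using is_mend_glue_induced_ball[OF loc t v acc] unfolding R_def by blast
qed

lemma o_ln_bounded_up_to_exp:
  fixes T :: "nat \<Rightarrow> nat" and a k :: nat
  assumes "2 \<le> a" and o: "(\<lambda>n. real (T n)) \<in> o(\<lambda>n. ln (real n))"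
  shows "\<exists>c. \<forall>n \<le> a ^ (c + k). T n \<le> c"
proof -
  have "ln a > 0" using assms(1) by simp
  have "\<forall>\<^sub>F n in at_top. norm (real (T n)) \<le> 1 / (2 * ln a) * norm (ln (real n))"
    using landau_o.smallD[OF o, of "1 / (2 * ln a)"] \<open>ln a > 0\<close> by simp
  moreover have "\<forall>\<^sub>F n in at_top. (1::nat) \<le> n" by (rule eventually_ge_at_top)
  ultimately have "\<forall>\<^sub>F n in at_top. 2 * real (T n) * ln a \<le> ln (real n)"
    by eventually_elim (use \<open>ln a > 0\<close> in \<open>simp add: field_simps\<close>)
  then obtain n0 where n0: "\<And>n. n \<ge> n0 \<Longrightarrow> 2 * real (T n) * ln a \<le> ln (real n)"
    unfolding eventually_at_top_linorder by blast
  define c where "c = max (Max (T ` {..n0})) k"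
  have "T n \<le> c" if "n \<le> a ^ (c + k)" for n
  proof (cases "n \<le> n0")
    case True
    then show ?thesis unfolding c_def by (simp add: le_max_iff_disj)
  next
    case False
    then have "2 * real (T n) * ln a \<le> ln (real n)" by (intro n0) simp
    also have "\<dots> \<le> ln (real (a ^ (c + k)))"
      using that False assms(1) by (subst ln_le_cancel_iff) (auto simp del: of_nat_power)
    also have "\<dots> = real (c + k) * ln a" using assms(1) by (simp add: ln_realpow)
    finally have "2 * T n \<le> c + k" using \<open>ln a > 0\<close> by simp
    then show ?thesis unfolding c_def by simp
  qed
  then show ?thesis by blast
qed

theorem corollary8p4:
  fixes \<Delta> r :: nat
    and \<psi> :: "('i::finite, 'o::finite) verifier"
    and T :: "nat \<Rightarrow> nat"
  assumes "local_verifier \<Delta> r \<psi>"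
    and "problem_mendable \<Delta> r \<psi> T"
    and "(\<lambda>n. real (T n)) \<in> o(\<lambda>n. ln (real n))"
  shows "\<exists>c::nat. problem_mendable \<Delta> r \<psi> (\<lambda>_. c)"
proof -
  obtain s and \<phi> :: "('i, 'o) verifier" where loc: "local_verifier \<Delta> s \<phi>"
    and same: "\<forall>V E inp lab. tree_family \<Delta> V E \<longrightarrow> (accepts \<phi> V E inp lab \<longleftrightarrow> accepts \<psi> V E inp lab)"
    and mv: "mendable_verifier \<Delta> s \<phi> T"
    using assms(2) unfolding problem_mendable_def by blast
  obtain c where c: "\<forall>n \<le> (\<Delta> + 2) ^ (c + 3 * s). T n \<le> c"
    using o_ln_bounded_up_to_exp[of "\<Delta> + 2" T "3 * s"] assms(3) by auto
  have "(\<Delta> + 1) ^ (c + 3 * s) \<le> (\<Delta> + 2) ^ (c + 3 * s)" by (simp add: power_mono)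
  then have "mendable_verifier \<Delta> s \<phi> (\<lambda>_. c)"
    using mendable_verifier_const_from_ball_sizes[OF loc mv] c by simp
  then show ?thesis using loc same unfolding problem_mendable_def by blast
qed

end
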